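(* Let $\mathbf{a}\in\mathbb{C}^N$, $h_{aw}\in\mathbb{C}$, $\sigma_w^2>0$, $\epsilon>0$ and $L>0$, and let $$\mathbf{A}=\begin{bmatrix}\mathbf{a}\mathbf{a}^H & \mathbf{a}h_{aw}^*\\ h_{aw}\mathbf{a}^H & |h_{aw}|^2\end{bmatrix}\in\mathbb{C}^{(N+1)\times(N+1)}.$$ For Hermitian positive semidefinite $\mathbf{W}\in\mathbb{C}^{(N+1)\times(N+1)}$, the constraint $$\ln\!\left(1+\frac{\mathrm{Tr}(\mathbf{A}\mathbf{W})}{\sigma_w^2}\right)-\frac{\mathrm{Tr}(\mathbf{A}\mathbf{W})}{\mathrm{Tr}(\mathbf{A}\mathbf{W})+\sigma_w^2}\le \frac{2\epsilon^2}{L}$$ is equivalent to $$\left(1+\frac{\mathrm{Tr}(\mathbf{A}\mathbf{W})}{\sigma_w^2}\right)\ln\!\left(1+\frac{\mathrm{Tr}(\mathbf{A}\mathbf{W})}{\sigma_w^2}\right)-\left(1+\frac{2\epsilon^2}{L}\right)\frac{\mathrm{Tr}(\mathbf{A}\mathbf{W})}{\sigma_w^2}\le\frac{2\epsilon^2}{L},$$ and the latter is a convex constraint with respect to $\mathbf{W}$ (on the cone of Hermitian positive semidefinite matrices).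
   Context: The first inequality is the covertness constraint $\mathcal{D}(\mathbb{P}_0|\mathbb{P}_1)\le 2\epsilon^2$ (Kullback–Leibler divergence over $L$ channel uses) after the lifting $\mathbf{W}=\mathbf{w}\mathbf{w}^H$ of a scaled reflection vector; $\mathrm{Tr}$ denotes the trace. *)

theory Defs
  imports "HOL-Analysis.Analysis"
begin

definition conj_transpose :: "complex^'m^'m \<Rightarrow> complex^'m^'m" where
  "conj_transpose W = (\<chi> i j. cnj (W $ j $ i))"

definition hermitian :: "complex^'m^'m \<Rightarrow> bool" where
  "hermitian W \<longleftrightarrow> conj_transpose W = W"

definition hermitian_psd :: "complex^'m^'m \<Rightarrow> bool" where
  "hermitian_psd W \<longleftrightarrow> hermitian W \<and>
     (\<forall>x::complex^'m. 0 \<le> (\<Sum>i\<in>UNIV. \<Sum>j\<in>UNIV. cnj (x $ i) * W $ i $ j * x $ j))"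

text \<open>The (N+1)x(N+1) block matrix A, indexed by 'n + unit (Inr () is the last index).\<close>
definition blockA :: "complex^'n \<Rightarrow> complex \<Rightarrow> complex^('n + unit)^('n + unit)" where
  "blockA a h = (\<chi> i j. (case (i, j) of
       (Inl k, Inl l) \<Rightarrow> a $ k * cnj (a $ l)
     | (Inl k, Inr _) \<Rightarrow> a $ k * cnj h
     | (Inr _, Inl l) \<Rightarrow> h * cnj (a $ l)
     | (Inr _, Inr _) \<Rightarrow> complex_of_real ((cmod h)^2)))"

end

(* Writing v = (a, h), the matrix A is the rank-one matrix v v^H, so t = Tr(A W) = v^H W v is
   nonnegative and real-linear in W on the Hermitian PSD cone. With x = t / sigma2 >= 0, multiplying the
   first constraint by 1 + x > 0 gives the second. Its left-hand side is g(x) with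
   g(x) = (1 + x) ln (1 + x) - (1 + c) x, whose derivative ln (1 + x) - c is increasing; so g is convex,
   and a convex function of a linear map is convex on the convex PSD cone. *)
theory Submission
  imports Defs
begin

lemma convex_on_compose_linear:
  assumes "linear f" and "convex S" and "f ` S \<subseteq> T" and "convex_on T g"
  shows "convex_on S (\<lambda>x. g (f x))"
proof (rule convex_onI)
  fix t :: real and x y assume "0 < t" "t < 1" "x \<in> S" "y \<in> S"
  then show "g (f ((1 - t) *\<^sub>R x + t *\<^sub>R y)) \<le> (1 - t) * g (f x) + t * g (f y)"
    using assms convex_onD[OF \<open>convex_on T g\<close>, of t "f x" "f y"]
    by (simp add: linear_add linear_scale image_subset_iff)
qed (fact \<open>convex S\<close>)

lemma convex_on_one_plus_mult_ln:
  "convex_on {-1<..} (\<lambda>x::real. (1 + x) * ln (1 + x) - (1 + c) * x)"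
proof (rule convex_on_realI[where f' = "\<lambda>x. ln (1 + x) - c"])
  fix x :: real assume "x \<in> {-1<..}"
  then show "((\<lambda>x. (1 + x) * ln (1 + x) - (1 + c) * x) has_real_derivative ln (1 + x) - c) (at x)"
    by (auto intro!: derivative_eq_intros simp: field_simps)
qed auto

lemma ln_sub_ratio_le_iff:
  fixes x c :: real
  assumes "0 < 1 + x"
  shows "ln (1 + x) - x / (1 + x) \<le> c \<longleftrightarrow> (1 + x) * ln (1 + x) - (1 + c) * x \<le> c"
proof -
  have "ln (1 + x) - x / (1 + x) \<le> c \<longleftrightarrow> (1 + x) * (ln (1 + x) - x / (1 + x)) \<le> (1 + x) * c"
    using assms by simp
  also have "(1 + x) * (ln (1 + x) - x / (1 + x)) = (1 + x) * ln (1 + x) - x"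
    using assms by (simp add: field_simps)
  finally show ?thesis by (simp add: algebra_simps)
qed

definition quad_form :: "complex^'m \<Rightarrow> complex^'m^'m \<Rightarrow> complex" where
  "quad_form x W = (\<Sum>i\<in>UNIV. \<Sum>j\<in>UNIV. cnj (x $ i) * W $ i $ j * x $ j)"

lemma hermitian_psd_iff_quad_form:
  "hermitian_psd W \<longleftrightarrow> hermitian W \<and> (\<forall>x. 0 \<le> quad_form x W)"
  by (simp add: hermitian_psd_def quad_form_def)

lemma conj_transpose_scaleR_add:
  "conj_transpose (u *\<^sub>R X + v *\<^sub>R Y) = u *\<^sub>R conj_transpose X + v *\<^sub>R conj_transpose Y"
  by (simp add: conj_transpose_def vec_eq_iff)

lemma quad_form_scaleR_add:
  "quad_form x (u *\<^sub>R X + v *\<^sub>R Y) = of_real u * quad_form x X + of_real v * quad_form x Y"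
proof -
  have "(u *\<^sub>R X + v *\<^sub>R Y) $ i $ j = of_real u * X $ i $ j + of_real v * Y $ i $ j" for i j
    by (simp add: complex_eq_iff)
  then show ?thesis
    by (simp add: quad_form_def sum.distrib sum_distrib_left algebra_simps)
qed

lemma hermitian_psd_convex: "convex {W::complex^'m^'m. hermitian_psd W}"
proof (rule convexI)
  fix X Y :: "complex^'m^'m" and u v :: real
  assume "X \<in> {W. hermitian_psd W}" "Y \<in> {W. hermitian_psd W}" "0 \<le> u" "0 \<le> v" "u + v = 1"
  then show "u *\<^sub>R X + v *\<^sub>R Y \<in> {W. hermitian_psd W}"
    by (auto simp: hermitian_psd_iff_quad_form hermitian_def conj_transpose_scaleR_add quad_form_scaleR_add
        less_eq_complex_def
        intro!: add_nonneg_nonneg mult_nonneg_nonneg)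
qed

lemma linear_Re_trace_mult: "linear (\<lambda>W. Re (trace (A ** W)))"
  by (rule linearI)
    (simp_all add: trace_def matrix_matrix_mult_def sum.distrib sum_distrib_left algebra_simps)

lemma linear_Re_trace_mult_divide: "linear (\<lambda>W. Re (trace (A ** W)) / c)"
  using linear_compose[OF linear_Re_trace_mult bounded_linear.linear[OF bounded_linear_divide]]
  by (simp add: o_def)

definition outer_prod :: "complex^'m \<Rightarrow> complex^'m^'m" where
  "outer_prod v = (\<chi> i j. v $ i * cnj (v $ j))"

lemma trace_outer_prod_mult: "trace (outer_prod v ** W) = quad_form v W"
proof -
  have "trace (outer_prod v ** W) = (\<Sum>i\<in>UNIV. \<Sum>j\<in>UNIV. v $ i * cnj (v $ j) * W $ j $ i)"
    by (simp add: trace_def matrix_matrix_mult_def outer_prod_def)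
  also have "\<dots> = quad_form v W"
    unfolding quad_form_def by (subst sum.swap) (simp add: algebra_simps)
  finally show ?thesis .
qed

lemma Re_trace_outer_prod_mult_nonneg:
  assumes "hermitian_psd W"
  shows "0 \<le> Re (trace (outer_prod v ** W))"
  using assms by (simp add: trace_outer_prod_mult hermitian_psd_iff_quad_form less_eq_complex_def)

definition stack :: "complex^'n \<Rightarrow> complex \<Rightarrow> complex^('n + unit)" where
  "stack a h = (\<chi> i. case i of Inl k \<Rightarrow> a $ k | Inr _ \<Rightarrow> h)"

lemma blockA_eq_outer_prod: "blockA a h = outer_prod (stack a h)"
  by (auto simp: vec_eq_iff blockA_def outer_prod_def stack_def complex_norm_square[symmetric] split: sum.split)

theorem lemma1:
  fixes a :: "complex^'n" and h :: complex and \<sigma>2 \<epsilon> L :: real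
  assumes "\<sigma>2 > 0" and "\<epsilon> > 0" and "L > 0"
  shows "(\<forall>W. hermitian_psd W \<longrightarrow>
           (let t = Re (trace (blockA a h ** W)) in
              (ln (1 + t / \<sigma>2) - t / (t + \<sigma>2) \<le> 2 * \<epsilon>^2 / L)
              \<longleftrightarrow>
              ((1 + t / \<sigma>2) * ln (1 + t / \<sigma>2) - (1 + 2 * \<epsilon>^2 / L) * (t / \<sigma>2)
                 \<le> 2 * \<epsilon>^2 / L)))
       \<and> convex_on {W. hermitian_psd W}
           (\<lambda>W. let t = Re (trace (blockA a h ** W)) in
              (1 + t / \<sigma>2) * ln (1 + t / \<sigma>2) - (1 + 2 * \<epsilon>^2 / L) * (t / \<sigma>2))"
proof -
  let ?c = "2 * \<epsilon>^2 / L"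
  let ?x = "\<lambda>W. Re (trace (blockA a h ** W)) / \<sigma>2"
  have x_nonneg: "0 \<le> ?x W" if "hermitian_psd W" for W
    using Re_trace_outer_prod_mult_nonneg[OF that] \<open>\<sigma>2 > 0\<close>
    by (simp add: blockA_eq_outer_prod)
  have "(ln (1 + t / \<sigma>2) - t / (t + \<sigma>2) \<le> ?c) \<longleftrightarrow>
        ((1 + t / \<sigma>2) * ln (1 + t / \<sigma>2) - (1 + ?c) * (t / \<sigma>2) \<le> ?c)"
    if "0 \<le> t / \<sigma>2" for t
  proof -
    have "t / (t + \<sigma>2) = (t / \<sigma>2) / (1 + t / \<sigma>2)"
      using \<open>\<sigma>2 > 0\<close> by (simp add: field_simps)
    then show ?thesis
      by (simp only:) (rule ln_sub_ratio_le_iff, use that in simp)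
  qed
  then have equivalence: "\<forall>W. hermitian_psd W \<longrightarrow> (let t = Re (trace (blockA a h ** W)) in
      (ln (1 + t / \<sigma>2) - t / (t + \<sigma>2) \<le> ?c) \<longleftrightarrow>
      ((1 + t / \<sigma>2) * ln (1 + t / \<sigma>2) - (1 + ?c) * (t / \<sigma>2) \<le> ?c))"
    using x_nonneg by (simp add: Let_def)
  have "convex_on {W. hermitian_psd W} (\<lambda>W. (1 + ?x W) * ln (1 + ?x W) - (1 + ?c) * ?x W)"
    by (rule convex_on_compose_linear[OF linear_Re_trace_mult_divide hermitian_psd_convex _
          convex_on_one_plus_mult_ln]) (auto dest: x_nonneg)
  with equivalence show ?thesis
    by (simp add: Let_def)
qed

end
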